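(* For integers $n\ge2$, $0<k<n$ and $0<i\le n$, the number of directed paths in $\Gamma$ from $(i,0)$ to $(n,k)$ is $$\pi(n,k,i)=\sum_{s=0}^{\min\{k,\,n-i\}}\binom{k}{s}\binom{n-k}{n-i-s}\,\pi(n-i,s,0).$$
   Context: Let $\Gamma$ be the directed graph whose nodes are the pairs $(n,k)$ of integers with $n\ge k\ge 0$, and whose edges are, for all $n\ge k\ge 0$: $(n+1,k)\to(n+1,k+1)$ and $(n,n-k)\to(n+1,k+1)$. $\pi(n,k,i)$ denotes the number of directed paths in $\Gamma$ from $(i,0)$ to $(n,k)$, where the trivial path counts when $(i,0)=(n,k)$ (so $\pi(0,0,0)=1$, and $\pi(m,0,0)=0$ for $m\ge1$). *)

theory Defs
  imports Main
begin

definition gamma_edge :: "nat \<times> nat \<Rightarrow> nat \<times> nat \<Rightarrow> bool" where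
  "gamma_edge u v \<longleftrightarrow>
     (\<exists>n k. k \<le> n \<and>
        ((u = (n + 1, k) \<and> v = (n + 1, k + 1)) \<or> (u = (n, n - k) \<and> v = (n + 1, k + 1))))"

text \<open>Directed paths from a to b, as nonempty vertex lists whose consecutive
  entries are joined by edges (the one-vertex list is the trivial path).\<close>

definition gamma_paths :: "nat \<times> nat \<Rightarrow> nat \<times> nat \<Rightarrow> (nat \<times> nat) list set" where
  "gamma_paths a b = {xs. xs \<noteq> [] \<and> hd xs = a \<and> last xs = b \<and>
       (\<forall>j. j + 1 < length xs \<longrightarrow> gamma_edge (xs ! j) (xs ! (j + 1)))}"

definition pi_count :: "nat \<Rightarrow> nat \<Rightarrow> nat \<Rightarrow> nat" where
  "pi_count n k i = card (gamma_paths (i, 0) (n, k))"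

end

theory Submission
  imports Defs
begin

text \<open>Every path ends with an edge into its last vertex (m, j), coming either from (m, j - 1) or
  from (m - 1, m - j). Hence \<open>\<pi>\<close> satisfies a Pascal-type recurrence, with first column
  \<open>\<pi>(m, 0, i) = [m = i]\<close>. Writing n = i + d, the right-hand side of the claimed formula is a
  Vandermonde-type convolution of the values \<open>\<pi>(d, s, 0)\<close>; splitting both binomial
  coefficients by Pascal's rule shows that it satisfies the same recurrence in k, which gives
  the formula by a double induction on d and k. It holds for all k \<le> n and i \<le> n.\<close>

lemma gamma_paths_successively:
  "gamma_paths a b = {xs. xs \<noteq> [] \<and> hd xs = a \<and> last xs = b \<and> successively gamma_edge xs}"
  by (simp add: gamma_paths_def successively_conv_nth)

lemma gamma_edge_iff:
  "gamma_edge u (m, j) \<longleftrightarrow> 0 < j \<and> j \<le> m \<and> (u = (m, j - 1) \<or> u = (m - 1, m - j))"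
proof
  assume "gamma_edge u (m, j)"
  then show "0 < j \<and> j \<le> m \<and> (u = (m, j - 1) \<or> u = (m - 1, m - j))"
    unfolding gamma_edge_def by auto
next
  assume edge: "0 < j \<and> j \<le> m \<and> (u = (m, j - 1) \<or> u = (m - 1, m - j))"
  then have "m = (m - 1) + 1" "j = (j - 1) + 1" "j - 1 \<le> m - 1" "m - j = (m - 1) - (j - 1)"
    by auto
  with edge show "gamma_edge u (m, j)"
    unfolding gamma_edge_def by metis
qed

lemma gamma_predecessors:
  "{u. gamma_edge u (m, j)} = (if 0 < j \<and> j \<le> m then {(m, j - 1), (m - 1, m - j)} else {})"
  using gamma_edge_iff by auto

lemma gamma_paths_snoc:
  "gamma_paths a v = (if v = a then {[v]} else {}) \<union>
     (\<lambda>xs. xs @ [v]) ` (\<Union>u\<in>{u. gamma_edge u v}. gamma_paths a u)"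
proof (intro set_eqI iffI)
  fix xs
  assume "xs \<in> gamma_paths a v"
  then have xs: "xs \<noteq> []" "hd xs = a" "last xs = v" "successively gamma_edge xs"
    by (auto simp: gamma_paths_successively)
  then obtain ys where ys: "xs = ys @ [v]"
    by (metis append_butlast_last_id)
  show "xs \<in> (if v = a then {[v]} else {}) \<union>
    (\<lambda>xs. xs @ [v]) ` (\<Union>u\<in>{u. gamma_edge u v}. gamma_paths a u)"
  proof (cases "ys = []")
    case True
    then show ?thesis using xs ys by auto
  next
    case False
    with xs ys have "gamma_edge (last ys) v" "ys \<in> gamma_paths a (last ys)"
      by (auto simp: gamma_paths_successively successively_append_iff)
    with ys show ?thesis by blast
  qed
next
  fix xs
  assume "xs \<in> (if v = a then {[v]} else {}) \<union>
    (\<lambda>xs. xs @ [v]) ` (\<Union>u\<in>{u. gamma_edge u v}. gamma_paths a u)"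
  then show "xs \<in> gamma_paths a v"
    by (auto simp: gamma_paths_successively successively_append_iff split: if_splits)
qed

lemma finite_gamma_paths: "finite (gamma_paths a (m, j))"
proof (induction m arbitrary: j)
  case 0
  show ?case
    by (subst gamma_paths_snoc) (auto simp: gamma_predecessors)
next
  case (Suc m)
  note IH_row = Suc.IH
  show ?case
  proof (induction j)
    case 0
    show ?case
      by (subst gamma_paths_snoc) (simp add: gamma_predecessors)
  next
    case (Suc j)
    then show ?case
      using IH_row[of "m - j"] by (subst gamma_paths_snoc) (simp add: gamma_predecessors)
  qed
qed

lemma pi_count_first_column: "pi_count m 0 i = (if m = i then 1 else 0)"
  unfolding pi_count_def by (subst gamma_paths_snoc) (simp add: gamma_predecessors)

lemma pi_count_rec:
  assumes "0 < j" "j \<le> m"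
  shows "pi_count m j i = pi_count m (j - 1) i + pi_count (m - 1) (m - j) i"
proof -
  let ?P = "gamma_paths (i, 0)"
  have paths: "?P (m, j) = (\<lambda>xs. xs @ [(m, j)]) ` (?P (m, j - 1) \<union> ?P (m - 1, m - j))"
    using assms by (subst gamma_paths_snoc) (auto simp: gamma_predecessors)
  have "?P (m, j - 1) \<inter> ?P (m - 1, m - j) = {}"
    using assms by (auto simp: gamma_paths_successively)
  then have "card (?P (m, j - 1) \<union> ?P (m - 1, m - j)) =
      card (?P (m, j - 1)) + card (?P (m - 1, m - j))"
    by (simp add: card_Un_disjoint finite_gamma_paths)
  moreover have "card (?P (m, j)) = card (?P (m, j - 1) \<union> ?P (m - 1, m - j))"
    unfolding paths by (rule card_image) (simp add: inj_on_def)
  ultimately show ?thesis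
    unfolding pi_count_def by simp
qed

lemma pi_count_below_start: "m < i \<Longrightarrow> j \<le> m \<Longrightarrow> pi_count m j i = 0"
proof (induction m arbitrary: j)
  case 0
  then show ?case by (simp add: pi_count_first_column)
next
  case (Suc m)
  note IH_row = Suc.IH
  from Suc.prems show ?case
  proof (induction j)
    case 0
    then show ?case by (simp add: pi_count_first_column)
  next
    case (Suc j)
    then show ?case
      using IH_row[of "m - j"] pi_count_rec[of "Suc j" "Suc m" i] by simp
  qed
qed

lemma pi_count_start_row: "k \<le> i \<Longrightarrow> pi_count i k i = 1"
proof (induction k)
  case 0
  then show ?case by (simp add: pi_count_first_column)
next
  case (Suc k)
  then show ?case
    using pi_count_rec[of "Suc k" i i] pi_count_below_start[of "i - 1" i "i - Suc k"] by simp
qed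

definition vandermonde_weighted :: "nat \<Rightarrow> nat \<Rightarrow> nat \<Rightarrow> (nat \<Rightarrow> 'a::comm_semiring_1) \<Rightarrow> 'a"
  where "vandermonde_weighted a b M x =
    (\<Sum>s\<le>M. of_nat (a choose s) * of_nat (b choose (M - s)) * x s)"

lemma vandermonde_weighted_Suc_left:
  "vandermonde_weighted (Suc a) b (Suc M) x =
     vandermonde_weighted a b (Suc M) x + vandermonde_weighted a b M (\<lambda>s. x (Suc s))"
proof -
  have "vandermonde_weighted (Suc a) b (Suc M) x = of_nat (b choose Suc M) * x 0 +
      (\<Sum>s\<le>M. (of_nat (a choose s) + of_nat (a choose Suc s)) *
        of_nat (b choose (M - s)) * x (Suc s))"
    unfolding vandermonde_weighted_def by (simp only: sum.atMost_Suc_shift) simp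
  moreover have "vandermonde_weighted a b (Suc M) x = of_nat (b choose Suc M) * x 0 +
      (\<Sum>s\<le>M. of_nat (a choose Suc s) * of_nat (b choose (M - s)) * x (Suc s))"
    unfolding vandermonde_weighted_def by (simp only: sum.atMost_Suc_shift) simp
  ultimately show ?thesis
    unfolding vandermonde_weighted_def by (simp add: algebra_simps sum.distrib)
qed

lemma vandermonde_weighted_Suc_right:
  "vandermonde_weighted a (Suc b) (Suc M) x =
     vandermonde_weighted a b (Suc M) x + vandermonde_weighted a b M x"
proof -
  have "(\<Sum>s\<le>M. of_nat (a choose s) * of_nat (Suc b choose (Suc M - s)) * x s) =
      (\<Sum>s\<le>M. of_nat (a choose s) * of_nat (b choose (Suc M - s)) * x s) +
      (\<Sum>s\<le>M. of_nat (a choose s) * of_nat (b choose (M - s)) * (x s :: 'a))"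
    unfolding sum.distrib[symmetric] by (rule sum.cong) (auto simp: Suc_diff_le algebra_simps)
  then show ?thesis
    unfolding vandermonde_weighted_def by (simp add: algebra_simps)
qed

lemma vandermonde_weighted_swap:
  "vandermonde_weighted a b M x = vandermonde_weighted b a M (\<lambda>s. x (M - s))"
  unfolding vandermonde_weighted_def
  by (rule sum.reindex_bij_witness[where i="\<lambda>s. M - s" and j="\<lambda>s. M - s"])
     (auto simp: mult.commute)

lemma vandermonde_weighted_add:
  "vandermonde_weighted a b M (\<lambda>s. x s + y s) =
     vandermonde_weighted a b M x + vandermonde_weighted a b M y"
  unfolding vandermonde_weighted_def by (simp add: distrib_left sum.distrib)

lemma vandermonde_weighted_cong:
  "(\<And>s. s \<le> M \<Longrightarrow> x s = y s) \<Longrightarrow> vandermonde_weighted a b M x = vandermonde_weighted a b M y"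
  unfolding vandermonde_weighted_def by (rule sum.cong) auto

lemma vandermonde_weighted_pascal:
  assumes "\<And>s. s \<le> M \<Longrightarrow> x (Suc s) = x s + y (M - s)"
  shows "vandermonde_weighted (Suc a) b (Suc M) x =
    vandermonde_weighted a (Suc b) (Suc M) x + vandermonde_weighted b a M y"
proof -
  have "vandermonde_weighted a b M (\<lambda>s. x (Suc s)) =
      vandermonde_weighted a b M (\<lambda>s. x s + y (M - s))"
    using assms by (rule vandermonde_weighted_cong)
  then have "vandermonde_weighted (Suc a) b (Suc M) x = vandermonde_weighted a b (Suc M) x +
      vandermonde_weighted a b M x + vandermonde_weighted a b M (\<lambda>s. y (M - s))"
    by (simp add: vandermonde_weighted_Suc_left vandermonde_weighted_add add.assoc)
  also have "vandermonde_weighted a b M (\<lambda>s. y (M - s)) = vandermonde_weighted b a M y"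
    by (simp add: vandermonde_weighted_swap[of b a M])
  finally show ?thesis
    by (simp add: vandermonde_weighted_Suc_right)
qed

lemma pi_count_vandermonde:
  "k \<le> i + d \<Longrightarrow>
    pi_count (i + d) k i = vandermonde_weighted k (i + d - k) d (\<lambda>s. pi_count d s 0)"
proof (induction d arbitrary: k)
  case 0
  then show ?case
    by (simp add: vandermonde_weighted_def pi_count_start_row pi_count_first_column)
next
  case (Suc d)
  note IH_row = Suc.IH
  from Suc.prems show ?case
  proof (induction k)
    case 0
    show ?case
      by (auto simp: vandermonde_weighted_def pi_count_first_column intro!: sum.neutral)
  next
    case (Suc k)
    define b where "b = i + Suc d - Suc k"
    have "pi_count (i + Suc d) (Suc k) i = pi_count (i + Suc d) k i + pi_count (i + d) b i"
      using pi_count_rec[of "Suc k" "i + Suc d" i] Suc.prems by (simp add: b_def)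
    also have "pi_count (i + Suc d) k i =
        vandermonde_weighted k (Suc b) (Suc d) (\<lambda>s. pi_count (Suc d) s 0)"
      using Suc.IH Suc.prems by (simp add: b_def Suc_diff_le)
    also have "pi_count (i + d) b i = vandermonde_weighted b k d (\<lambda>s. pi_count d s 0)"
      using IH_row[of b] Suc.prems by (simp add: b_def)
    also have "vandermonde_weighted k (Suc b) (Suc d) (\<lambda>s. pi_count (Suc d) s 0) +
        vandermonde_weighted b k d (\<lambda>s. pi_count d s 0) =
        vandermonde_weighted (Suc k) b (Suc d) (\<lambda>s. pi_count (Suc d) s 0)"
      by (rule vandermonde_weighted_pascal[symmetric]) (simp add: pi_count_rec)
    finally show ?case
      by (simp add: b_def)
  qed
qed

theorem proposition4:
  fixes n k i :: nat
  assumes "n \<ge> 2" and "0 < k" and "k < n" and "0 < i" and "i \<le> n"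
  shows "pi_count n k i =
    (\<Sum>s = 0..min k (n - i). (k choose s) * ((n - k) choose (n - i - s)) * pi_count (n - i) s 0)"
proof -
  have "pi_count n k i = vandermonde_weighted k (n - k) (n - i) (\<lambda>s. pi_count (n - i) s 0)"
    using pi_count_vandermonde[of k i "n - i"] assms by simp
  also have "\<dots> =
    (\<Sum>s = 0..min k (n - i). (k choose s) * ((n - k) choose (n - i - s)) * pi_count (n - i) s 0)"
    unfolding vandermonde_weighted_def of_nat_id atLeast0AtMost
    by (rule sum.mono_neutral_right) auto
  finally show ?thesis .
qed

end
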